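(* Let $X$ be a compact metric space and $f\colon X\to X$ continuous. Suppose $\delta_1>0$, $\delta_2\ge 0$, $\chi\in(0,1)$ and $\tau\in\mathbb{N}$ are such that for every $(x_1,n_1),(x_2,n_2)\in X\times\mathbb{N}$ there exist $t\in\{0,1,\dots,\tau\}$ and $y\in X$ with \[ d(f^ky,f^kx_1)\le\delta_1\chi^{n_1-k}\ \text{for all } 0\le k<n_1,\qquad d_{n_2}(f^{n_1+t}y,x_2)\le\delta_2. \] Then $(X,f)$ has the specification property at scale $\delta_2+\delta_1/(1-\chi)$ with gap size $\tau$; that is, writing $\delta'=\delta_2+\delta_1/(1-\chi)$, for every finite collection $(x_1,n_1),\dots,(x_k,n_k)\in X\times\mathbb{N}$ there exist integers $0=T_1<T_2<\dots<T_k$ and $y\in X$ such that $f^{T_i}(y)\in B_{n_i}(x_i,\delta')$ for all $1\le i\le k$ and $T_i-(T_{i-1}+n_{i-1})\in[0,\tau]$ for all $2\le i\le k$.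
   Context: $d_n(x,y)=\max\{d(f^kx,f^ky):0\le k<n\}$ is the $n$th dynamical metric, and $B_n(x,\epsilon)=\{y\in X: d_n(x,y)<\epsilon\}$ is the Bowen ball. *)

theory Defs
  imports "HOL-Analysis.Analysis"
begin

text \<open>n-th dynamical metric d_n(x,y) = max{d(f^k x, f^k y) : 0 <= k < n} (used for n >= 1).\<close>
definition dyn_dist :: "('a::metric_space \<Rightarrow> 'a) \<Rightarrow> nat \<Rightarrow> 'a \<Rightarrow> 'a \<Rightarrow> real" where
  "dyn_dist f n x y = Max {dist ((f ^^ k) x) ((f ^^ k) y) | k. k < n}"

definition bowen_ball :: "('a::metric_space \<Rightarrow> 'a) \<Rightarrow> nat \<Rightarrow> 'a \<Rightarrow> real \<Rightarrow> 'a set" where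
  "bowen_ball f n x \<epsilon> = {y. dyn_dist f n x y < \<epsilon>}"

text \<open>Specification property at scale delta with gap size tau: for every finite collection
  (x_0,n_0),...,(x_{m-1},n_{m-1}) (indices shifted to start at 0, n_i positive integers)
  there are 0 = T_0 < T_1 < ... and y with f^{T_i} y in B_{n_i}(x_i,delta) and
  T_{i+1} - (T_i + n_i) in [0,tau].\<close>
definition has_specification :: "('a::metric_space \<Rightarrow> 'a) \<Rightarrow> real \<Rightarrow> nat \<Rightarrow> bool" where
  "has_specification f \<delta> \<tau> \<longleftrightarrow>
    (\<forall>(m::nat) (xs::nat \<Rightarrow> 'a) (ns::nat \<Rightarrow> nat). (\<forall>i<m. 1 \<le> ns i) \<longrightarrow>
      (\<exists>(T::nat \<Rightarrow> nat) y. T 0 = 0 \<and>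
         (\<forall>i. Suc i < m \<longrightarrow> T i < T (Suc i)) \<and>
         (\<forall>i<m. (f ^^ T i) y \<in> bowen_ball f (ns i) (xs i) \<delta>) \<and>
         (\<forall>i. Suc i < m \<longrightarrow> T i + ns i \<le> T (Suc i) \<and> T (Suc i) - (T i + ns i) \<le> \<tau>)))"

end

theory Submission
  imports Defs
begin

text \<open>The orbit segments are glued one at a time. If y already follows the first m segments, up
  to the time N where segment m ends, the hypothesis gives a point y' that shadows y on [0, N) with
  error d1 \<kappa>^(N - p) at time p and then, after a gap of at most \<tau>, follows segment m + 1
  within d2. Each gluing adds one term of a geometric series to the error at every earlier time p,
  so the error at time p stays below d2 + d1 (1 + \<kappa> + ... + \<kappa>^(e - 1)) with e the distance
  from p to the current end, which is less than d2 + d1 / (1 - \<kappa>).\<close>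

lemma dist_le_dyn_dist:
  assumes "k < n"
  shows "dist ((f ^^ k) x) ((f ^^ k) y) \<le> dyn_dist f n x y"
  unfolding dyn_dist_def using assms by (intro Max_ge) auto

lemma dyn_dist_less_iff:
  assumes "0 < n"
  shows "dyn_dist f n x y < r \<longleftrightarrow> (\<forall>k<n. dist ((f ^^ k) x) ((f ^^ k) y) < r)"
proof -
  have image: "{dist ((f ^^ k) x) ((f ^^ k) y) | k. k < n}
                = (\<lambda>k. dist ((f ^^ k) x) ((f ^^ k) y)) ` {..<n}"
    by auto
  show ?thesis
    unfolding dyn_dist_def image using assms by (subst Max_less_iff) auto
qed

lemma funpow_apply_add: "(f ^^ k) ((f ^^ t) y) = (f ^^ (t + k)) y"
  by (simp add: funpow_add add.commute)

lemma dist_geometric_error_step: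
  fixes \<kappa> d1 d2 :: real
  assumes "0 \<le> \<kappa>" "0 \<le> d1" "e < e'"
    and "dist x z \<le> d2 + d1 * (\<Sum>j<e. \<kappa> ^ j)" "dist x' x \<le> d1 * \<kappa> ^ e"
  shows "dist x' z \<le> d2 + d1 * (\<Sum>j<e'. \<kappa> ^ j)"
proof -
  have "dist x' z \<le> dist x z + dist x' x"
    by (metis add.commute dist_triangle)
  also have "\<dots> \<le> d2 + d1 * (\<Sum>j<Suc e. \<kappa> ^ j)"
    using assms(4,5) by (simp add: distrib_left)
  also have "\<dots> \<le> d2 + d1 * (\<Sum>j<e'. \<kappa> ^ j)"
    using assms(1-3) by (intro add_left_mono mult_left_mono sum_mono2) auto
  finally show ?thesis .
qed

definition contracting_gluing ::
    "('a::metric_space \<Rightarrow> 'a) \<Rightarrow> real \<Rightarrow> real \<Rightarrow> real \<Rightarrow> nat \<Rightarrow> bool" where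
  "contracting_gluing f d1 d2 \<kappa> \<tau> \<longleftrightarrow>
     (\<forall>x1 n1 x2 n2. 1 \<le> n1 \<longrightarrow> 1 \<le> n2 \<longrightarrow>
       (\<exists>t\<le>\<tau>. \<exists>y. (\<forall>k<n1. dist ((f ^^ k) y) ((f ^^ k) x1) \<le> d1 * \<kappa> ^ (n1 - k)) \<and>
                      dyn_dist f n2 ((f ^^ (n1 + t)) y) x2 \<le> d2))"

definition follows_segments ::
    "('a::metric_space \<Rightarrow> 'a) \<Rightarrow> real \<Rightarrow> real \<Rightarrow> real \<Rightarrow> nat \<Rightarrow> (nat \<Rightarrow> 'a) \<Rightarrow> (nat \<Rightarrow> nat) \<Rightarrow>
      nat \<Rightarrow> (nat \<Rightarrow> nat) \<Rightarrow> 'a \<Rightarrow> bool" where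
  "follows_segments f d1 d2 \<kappa> \<tau> xs ns m T y \<longleftrightarrow>
     T 0 = 0 \<and>
     (\<forall>i<m. T i + ns i \<le> T (Suc i) \<and> T (Suc i) \<le> T i + ns i + \<tau>) \<and>
     (\<forall>i\<le>m. T i + ns i \<le> T m + ns m) \<and>
     (\<forall>i\<le>m. \<forall>k<ns i. dist ((f ^^ (T i + k)) y) ((f ^^ k) (xs i))
                        \<le> d2 + d1 * (\<Sum>j<T m + ns m - (T i + k). \<kappa> ^ j))"

lemma follows_segments_0:
  fixes d1 d2 \<kappa> :: real
  assumes "0 \<le> d1" "0 \<le> d2" "0 \<le> \<kappa>"
  shows "follows_segments f d1 d2 \<kappa> \<tau> xs ns 0 (\<lambda>_. 0) (xs 0)"
proof -
  have "0 \<le> d2 + d1 * (\<Sum>j<e. \<kappa> ^ j)" for e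
    using assms by (simp add: sum_nonneg)
  then show ?thesis
    unfolding follows_segments_def by auto
qed

lemma follows_segments_Suc:
  fixes f :: "'a::metric_space \<Rightarrow> 'a" and d1 d2 \<kappa> :: real and \<tau> :: nat
  assumes "0 \<le> d1" "0 \<le> d2" "0 \<le> \<kappa>"
    and gluing: "contracting_gluing f d1 d2 \<kappa> \<tau>"
    and "1 \<le> ns 0" "1 \<le> ns (Suc m)"
    and "follows_segments f d1 d2 \<kappa> \<tau> xs ns m T y"
  shows "\<exists>T' y'. follows_segments f d1 d2 \<kappa> \<tau> xs ns (Suc m) T' y'"
proof -
  from assms(7) have T0: "T 0 = 0"
    and gaps: "\<forall>i<m. T i + ns i \<le> T (Suc i) \<and> T (Suc i) \<le> T i + ns i + \<tau>"
    and ends: "\<forall>i\<le>m. T i + ns i \<le> T m + ns m"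
    and close: "\<forall>i\<le>m. \<forall>k<ns i. dist ((f ^^ (T i + k)) y) ((f ^^ k) (xs i))
                                  \<le> d2 + d1 * (\<Sum>j<T m + ns m - (T i + k). \<kappa> ^ j)"
    unfolding follows_segments_def by auto
  define N where "N = T m + ns m"
  have "1 \<le> N"
    using ends assms(5) T0 unfolding N_def by force
  then obtain t y' where "t \<le> \<tau>"
    and y'_shadows: "\<forall>p<N. dist ((f ^^ p) y') ((f ^^ p) y) \<le> d1 * \<kappa> ^ (N - p)"
    and y'_follows: "dyn_dist f (ns (Suc m)) ((f ^^ (N + t)) y') (xs (Suc m)) \<le> d2"
    using gluing assms(6) unfolding contracting_gluing_def by blast
  define T' where "T' = T(Suc m := N + t)"
  have T'_old: "T' i = T i" if "i \<le> m" for i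
    using that unfolding T'_def by simp
  have N_less_end: "N < T' (Suc m) + ns (Suc m)"
    using assms(6) unfolding T'_def by simp
  have T'_close: "dist ((f ^^ (T' i + k)) y') ((f ^^ k) (xs i))
          \<le> d2 + d1 * (\<Sum>j<T' (Suc m) + ns (Suc m) - (T' i + k). \<kappa> ^ j)"
    if "i \<le> Suc m" "k < ns i" for i k
  proof (cases "i = Suc m")
    case True
    have "dist ((f ^^ (T' i + k)) y') ((f ^^ k) (xs i)) \<le> d2"
      using dist_le_dyn_dist[of k "ns i" f "(f ^^ (N + t)) y'" "xs i"] y'_follows that(2)
      unfolding True T'_def by (simp add: funpow_apply_add)
    moreover have "0 \<le> d1 * (\<Sum>j<T' (Suc m) + ns (Suc m) - (T' i + k). \<kappa> ^ j)"
      using assms(1,3) by (simp add: sum_nonneg)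
    ultimately show ?thesis
      by linarith
  next
    case False
    with that ends have "i \<le> m" "T i + k < N"
      unfolding N_def by (auto simp: le_Suc_eq)
    then have "N - (T i + k) < T' (Suc m) + ns (Suc m) - (T' i + k)"
      and "dist ((f ^^ (T' i + k)) y) ((f ^^ k) (xs i)) \<le> d2 + d1 * (\<Sum>j<N - (T i + k). \<kappa> ^ j)"
      and "dist ((f ^^ (T' i + k)) y') ((f ^^ (T' i + k)) y) \<le> d1 * \<kappa> ^ (N - (T i + k))"
      using N_less_end T'_old close that(2) y'_shadows unfolding N_def by auto
    then show ?thesis
      by (rule dist_geometric_error_step[OF assms(3,1)])
  qed
  have T'_gaps: "\<forall>i<Suc m. T' i + ns i \<le> T' (Suc i) \<and> T' (Suc i) \<le> T' i + ns i + \<tau>"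
    using gaps \<open>t \<le> \<tau>\<close> unfolding T'_def N_def by (auto simp: less_Suc_eq)
  have T'_ends: "\<forall>i\<le>Suc m. T' i + ns i \<le> T' (Suc m) + ns (Suc m)"
    using ends N_less_end T'_old unfolding N_def by (fastforce simp: le_Suc_eq)
  have "T' 0 = 0"
    using T0 T'_old by simp
  with T'_gaps T'_ends T'_close show ?thesis
    unfolding follows_segments_def by blast
qed

lemma follows_segments_exists:
  fixes f :: "'a::metric_space \<Rightarrow> 'a" and d1 d2 \<kappa> :: real and \<tau> :: nat
  assumes "0 \<le> d1" "0 \<le> d2" "0 \<le> \<kappa>"
    and gluing: "contracting_gluing f d1 d2 \<kappa> \<tau>"
    and "\<forall>i\<le>m. 1 \<le> ns i"
  shows "\<exists>T y. follows_segments f d1 d2 \<kappa> \<tau> xs ns m T y"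
  using assms(5)
proof (induction m)
  case 0
  then show ?case
    using follows_segments_0[OF assms(1-3)] by blast
next
  case (Suc m)
  then show ?case
    using follows_segments_Suc[OF assms(1-4)] by (metis le_SucI le_refl zero_le)
qed

lemma glued_orbit_in_bowen_balls:
  fixes f :: "'a::metric_space \<Rightarrow> 'a" and d1 d2 \<kappa> :: real and \<tau> :: nat
  assumes "0 < d1" "0 \<le> d2" "0 < \<kappa>" "\<kappa> < 1"
    and gluing: "contracting_gluing f d1 d2 \<kappa> \<tau>"
    and ns_pos: "\<forall>i\<le>m. 1 \<le> ns i"
  shows "\<exists>(T::nat \<Rightarrow> nat) y. T 0 = 0 \<and>
           (\<forall>i<m. T i + ns i \<le> T (Suc i) \<and> T (Suc i) \<le> T i + ns i + \<tau>) \<and>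
           (\<forall>i\<le>m. (f ^^ T i) y \<in> bowen_ball f (ns i) (xs i) (d2 + d1 / (1 - \<kappa>)))"
proof -
  obtain T y where "T 0 = 0"
    and gaps: "\<forall>i<m. T i + ns i \<le> T (Suc i) \<and> T (Suc i) \<le> T i + ns i + \<tau>"
    and close: "\<forall>i\<le>m. \<forall>k<ns i. dist ((f ^^ (T i + k)) y) ((f ^^ k) (xs i))
                                  \<le> d2 + d1 * (\<Sum>j<T m + ns m - (T i + k). \<kappa> ^ j)"
    using follows_segments_exists[of d1 d2 \<kappa> f \<tau> m ns xs] assms
    unfolding follows_segments_def by auto
  have "dist ((f ^^ k) (xs i)) ((f ^^ k) ((f ^^ T i) y)) < d2 + d1 / (1 - \<kappa>)"
    if "i \<le> m" "k < ns i" for i k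
  proof -
    have "d1 * (\<Sum>j<T m + ns m - (T i + k). \<kappa> ^ j) < d1 * (1 / (1 - \<kappa>))"
      using assms(1,3,4) by (intro mult_strict_left_mono geometric_sum_less) auto
    moreover have "dist ((f ^^ k) (xs i)) ((f ^^ k) ((f ^^ T i) y))
                     \<le> d2 + d1 * (\<Sum>j<T m + ns m - (T i + k). \<kappa> ^ j)"
      using close that by (simp add: funpow_apply_add dist_commute)
    ultimately show ?thesis
      by simp
  qed
  moreover have "0 < ns i" if "i \<le> m" for i
    using that ns_pos by auto
  ultimately have "(f ^^ T i) y \<in> bowen_ball f (ns i) (xs i) (d2 + d1 / (1 - \<kappa>))"
    if "i \<le> m" for i
    using that by (simp add: bowen_ball_def dyn_dist_less_iff)
  with \<open>T 0 = 0\<close> gaps show ?thesis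
    by blast
qed

theorem lemma5p10:
  fixes f :: "'a::metric_space \<Rightarrow> 'a"
    and d1 d2 \<kappa> :: real and \<tau> :: nat
  assumes "compact (UNIV :: 'a set)"
    and "continuous_on UNIV f"
    and "d1 > 0" and "d2 \<ge> 0" and "0 < \<kappa>" and "\<kappa> < 1"
    and "\<forall>x1 n1 x2 n2. 1 \<le> n1 \<longrightarrow> 1 \<le> n2 \<longrightarrow>
           (\<exists>t\<le>\<tau>. \<exists>y. (\<forall>k<n1. dist ((f ^^ k) y) ((f ^^ k) x1) \<le> d1 * \<kappa> ^ (n1 - k)) \<and>
                          dyn_dist f n2 ((f ^^ (n1 + t)) y) x2 \<le> d2)"
  shows "has_specification f (d2 + d1 / (1 - \<kappa>)) \<tau>"
  unfolding has_specification_def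
proof (intro allI impI)
  fix m :: nat and xs :: "nat \<Rightarrow> 'a" and ns :: "nat \<Rightarrow> nat"
  assume ns_pos: "\<forall>i<m. 1 \<le> ns i"
  show "\<exists>T y. T 0 = 0 \<and> (\<forall>i. Suc i < m \<longrightarrow> T i < T (Suc i)) \<and>
          (\<forall>i<m. (f ^^ T i) y \<in> bowen_ball f (ns i) (xs i) (d2 + d1 / (1 - \<kappa>))) \<and>
          (\<forall>i. Suc i < m \<longrightarrow> T i + ns i \<le> T (Suc i) \<and> T (Suc i) - (T i + ns i) \<le> \<tau>)"
  proof (cases m)
    case 0
    then show ?thesis by auto
  next
    case (Suc l)
    then obtain T y where "T 0 = 0"
      and gaps: "\<forall>i<l. T i + ns i \<le> T (Suc i) \<and> T (Suc i) \<le> T i + ns i + \<tau>"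
      and balls: "\<forall>i\<le>l. (f ^^ T i) y \<in> bowen_ball f (ns i) (xs i) (d2 + d1 / (1 - \<kappa>))"
      using glued_orbit_in_bowen_balls[of d1 d2 \<kappa> f \<tau> l ns xs] assms(3-7) ns_pos
      unfolding contracting_gluing_def by auto
    have "T i < T (Suc i)" if "i < l" for i
      using gaps[rule_format, OF that] ns_pos[rule_format, of i] that Suc by simp
    with \<open>T 0 = 0\<close> gaps balls Suc show ?thesis
      by (intro exI[of _ T] exI[of _ y]) (auto simp: less_Suc_eq_le Suc_le_eq)
  qed
qed

end
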